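(* For every integer $D\ge 2$, there exists a 2-degenerate graph $H_D$ with maximum degree $D$ such that $H_D^2$ is not $(3D-5)$-degenerate.
   Context: A graph is $k$-degenerate if every subgraph has a vertex of degree at most $k$. The square $H^2$ is obtained from $H$ by adding an edge between every pair of vertices at distance 2 in $H$. *)

theory Defs
  imports Main
begin

definition simple_graph :: "'a set \<Rightarrow> ('a \<Rightarrow> 'a \<Rightarrow> bool) \<Rightarrow> bool" where
  "simple_graph V E \<longleftrightarrow> finite V \<and>
     (\<forall>u v. E u v \<longrightarrow> u \<in> V \<and> v \<in> V \<and> u \<noteq> v) \<and>
     (\<forall>u v. E u v \<longrightarrow> E v u)"

definition degree :: "('a \<Rightarrow> 'a \<Rightarrow> bool) \<Rightarrow> 'a \<Rightarrow> nat" where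
  "degree E v = card {w. E v w}"

definition subgraph :: "'a set \<Rightarrow> ('a \<Rightarrow> 'a \<Rightarrow> bool) \<Rightarrow> 'a set \<Rightarrow> ('a \<Rightarrow> 'a \<Rightarrow> bool) \<Rightarrow> bool" where
  "subgraph S F V E \<longleftrightarrow> S \<subseteq> V \<and>
     (\<forall>u v. F u v \<longrightarrow> E u v \<and> u \<in> S \<and> v \<in> S) \<and>
     (\<forall>u v. F u v \<longrightarrow> F v u)"

definition degenerate :: "'a set \<Rightarrow> ('a \<Rightarrow> 'a \<Rightarrow> bool) \<Rightarrow> nat \<Rightarrow> bool" where
  "degenerate V E k \<longleftrightarrow>
     (\<forall>S F. subgraph S F V E \<and> S \<noteq> {} \<longrightarrow> (\<exists>v\<in>S. degree F v \<le> k))"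

definition max_degree :: "'a set \<Rightarrow> ('a \<Rightarrow> 'a \<Rightarrow> bool) \<Rightarrow> nat \<Rightarrow> bool" where
  "max_degree V E D \<longleftrightarrow> (\<forall>v\<in>V. degree E v \<le> D) \<and> (\<exists>v\<in>V. degree E v = D)"

definition graph_square :: "('a \<Rightarrow> 'a \<Rightarrow> bool) \<Rightarrow> 'a \<Rightarrow> 'a \<Rightarrow> bool" where
  "graph_square E u v \<longleftrightarrow> u \<noteq> v \<and> (E u v \<or> (\<exists>w. E u w \<and> E w v))"

end

theory Submission
  imports Defs "HOL-Library.Countable"
begin

text \<open>For \<open>D = n + 1\<close>, take two copies of \<open>K\<^sub>n\<^sub>,\<^sub>n\<close>, subdivide every edge once, add a
  perfect matching between the two sides of each copy, and link the subdivision vertices of the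
  two copies by paths of length two. Removing first the linking vertices, then the subdivision
  vertices, then the rest, every vertex has at most two neighbours left when it is removed, so the
  graph is 2-degenerate, and all degrees are at most \<open>D\<close>. In its square, however, every vertex
  that is not a linking vertex has \<open>3n - 1 = 3D - 4\<close> neighbours among the non-linking
  vertices, so these induce a subgraph of minimum degree above \<open>3D - 5\<close>.\<close>

lemma card_le_2_if_subset_doubleton: "A \<subseteq> {a, b} \<Longrightarrow> card A \<le> 2"
  using card_mono[of "{a, b}" A] card_insert_le_m1[of 2 "{b}" a] by simp

lemma degenerate_if_rank:
  fixes r :: "'a \<Rightarrow> nat"
  assumes "\<And>v. v \<in> V \<Longrightarrow> finite {w. E v w}"
    and "\<And>v. v \<in> V \<Longrightarrow> card {w. E v w \<and> r v \<le> r w} \<le> k"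
  shows "degenerate V E k"
  unfolding degenerate_def
proof (intro allI impI, elim conjE)
  fix S F assume sub: "subgraph S F V E" and "S \<noteq> {}"
  then obtain v where v: "v \<in> S" and least: "\<And>u. u \<in> S \<Longrightarrow> r v \<le> r u"
    using ex_has_least_nat[of "\<lambda>u. u \<in> S" _ r] by blast
  have "v \<in> V" using sub v by (auto simp: subgraph_def)
  have "{w. F v w} \<subseteq> {w. E v w \<and> r v \<le> r w}"
    using sub least by (auto simp: subgraph_def)
  then have "degree F v \<le> card {w. E v w \<and> r v \<le> r w}"
    unfolding degree_def using assms(1)[OF \<open>v \<in> V\<close>] by (intro card_mono) auto
  then show "\<exists>v\<in>S. degree F v \<le> k" using assms(2)[OF \<open>v \<in> V\<close>] v le_trans by blast
qed

lemma not_degenerate_if_min_degree: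
  assumes "S \<subseteq> V" "S \<noteq> {}" "\<And>u v. E u v \<Longrightarrow> E v u"
    and "\<And>v. v \<in> S \<Longrightarrow> k < card {w \<in> S. E v w}"
  shows "\<not> degenerate V E k"
proof
  define F where "F u v \<longleftrightarrow> E u v \<and> u \<in> S \<and> v \<in> S" for u v
  have "subgraph S F V E" using assms(1,3) by (auto simp: subgraph_def F_def)
  moreover assume "degenerate V E k"
  ultimately obtain v where "v \<in> S" "degree F v \<le> k"
    using assms(2) by (auto simp: degenerate_def)
  moreover have "{w. F v w} = {w \<in> S. E v w}" if "v \<in> S" using that by (auto simp: F_def)
  ultimately show False using assms(4) by (fastforce simp: degree_def)
qed

lemma graph_square_sym: "(\<And>u v. E u v \<Longrightarrow> E v u) \<Longrightarrow> graph_square E u v \<Longrightarrow> graph_square E v u"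
  unfolding graph_square_def by blast

definition map_graph :: "('a \<Rightarrow> 'b) \<Rightarrow> ('a \<Rightarrow> 'a \<Rightarrow> bool) \<Rightarrow> 'b \<Rightarrow> 'b \<Rightarrow> bool" where
  "map_graph f E x y \<longleftrightarrow> (\<exists>a b. x = f a \<and> y = f b \<and> E a b)"

lemma degree_map_graph:
  assumes "inj f" shows "degree (map_graph f E) (f a) = degree E a"
proof -
  have "{y. map_graph f E (f a) y} = f ` {b. E a b}"
    using assms by (auto simp: map_graph_def inj_eq)
  then show ?thesis
    using assms by (simp add: degree_def card_image inj_on_subset[OF assms])
qed

lemma simple_graph_map_graph: "inj f \<Longrightarrow> simple_graph V E \<Longrightarrow> simple_graph (f ` V) (map_graph f E)"
  by (auto simp: simple_graph_def map_graph_def inj_eq)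

lemma max_degree_map_graph: "inj f \<Longrightarrow> max_degree V E D \<Longrightarrow> max_degree (f ` V) (map_graph f E) D"
  by (auto simp: max_degree_def degree_map_graph)

lemma graph_square_map_graph: "inj f \<Longrightarrow> graph_square (map_graph f E) = map_graph f (graph_square E)"
  by (intro ext) (auto simp: graph_square_def map_graph_def inj_eq)

lemma subgraph_map_graph:
  "subgraph S F V E \<Longrightarrow> subgraph (f ` S) (map_graph f F) (f ` V) (map_graph f E)"
  unfolding subgraph_def map_graph_def by blast

lemma subgraph_of_map_graph:
  assumes "inj f" and sub: "subgraph S' F' (f ` V) (map_graph f E)"
  defines "F \<equiv> \<lambda>a b. F' (f a) (f b)"
  shows "subgraph (f -` S') F V E" and "S' = f ` (f -` S')" and "F' = map_graph f F"
proof -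
  have F': "F' x y \<Longrightarrow> \<exists>a b. x = f a \<and> y = f b \<and> E a b \<and> x \<in> S' \<and> y \<in> S'" for x y
    using sub by (auto simp: subgraph_def map_graph_def)
  show "S' = f ` (f -` S')" using sub by (auto simp: subgraph_def)
  show "F' = map_graph f F"
    unfolding map_graph_def F_def using F' by (intro ext) blast
  show "subgraph (f -` S') F V E"
    using sub F' \<open>inj f\<close> by (fastforce simp: subgraph_def F_def inj_eq)
qed

lemma degenerate_map_graph_iff:
  assumes "inj f" shows "degenerate (f ` V) (map_graph f E) k \<longleftrightarrow> degenerate V E k"
proof
  assume deg: "degenerate (f ` V) (map_graph f E) k"
  show "degenerate V E k" unfolding degenerate_def
  proof (intro allI impI, elim conjE)
    fix S F assume "subgraph S F V E" "S \<noteq> {}"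
    then have "subgraph (f ` S) (map_graph f F) (f ` V) (map_graph f E)" "f ` S \<noteq> {}"
      by (auto intro: subgraph_map_graph)
    then obtain x where "x \<in> f ` S" "degree (map_graph f F) x \<le> k"
      using deg unfolding degenerate_def by blast
    then show "\<exists>v\<in>S. degree F v \<le> k" by (auto simp: degree_map_graph[OF assms])
  qed
next
  assume deg: "degenerate V E k"
  show "degenerate (f ` V) (map_graph f E) k" unfolding degenerate_def
  proof (intro allI impI, elim conjE)
    fix S' F' assume sub: "subgraph S' F' (f ` V) (map_graph f E)" and "S' \<noteq> {}"
    define F where "F a b \<longleftrightarrow> F' (f a) (f b)" for a b
    note pull = subgraph_of_map_graph[OF assms sub, folded F_def]
    have "f -` S' \<noteq> {}" using pull(2) \<open>S' \<noteq> {}\<close> by blast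
    then obtain v where "f v \<in> S'" "degree F v \<le> k"
      using deg pull(1) unfolding degenerate_def by blast
    moreover have "degree F' (f v) = degree F v"
      unfolding pull(3) by (rule degree_map_graph[OF assms])
    ultimately show "\<exists>x\<in>S'. degree F' x \<le> k" by metis
  qed
qed

text \<open>For \<open>c \<in> {True, False}\<close> and \<open>i, j < n\<close>: \<open>L c i\<close> and \<open>R c j\<close> are the two sides of
  copy \<open>c\<close>, joined by the matching edges \<open>L c i \<frown> R c i\<close> and by the paths
  \<open>L c i \<frown> M c i j \<frown> R c j\<close>; for \<open>j \<noteq> k\<close> the path \<open>M True i j \<frown> W i j k \<frown> M False i k\<close>
  links the copies.\<close>

datatype vtx = L bool nat | R bool nat | M bool nat nat | W nat nat nat

instance vtx :: countable by countable_datatype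

fun adj :: "nat \<Rightarrow> vtx \<Rightarrow> vtx \<Rightarrow> bool" where
  "adj n (L c i) v \<longleftrightarrow> i < n \<and> (v = R c i \<or> (\<exists>j<n. v = M c i j))"
| "adj n (R c j) v \<longleftrightarrow> j < n \<and> (v = L c j \<or> (\<exists>i<n. v = M c i j))"
| "adj n (M c i j) v \<longleftrightarrow> i < n \<and> j < n \<and>
     (v = L c i \<or> v = R c j \<or> (\<exists>k<n. k \<noteq> j \<and> v = (if c then W i j k else W i k j)))"
| "adj n (W i j k) v \<longleftrightarrow> i < n \<and> j < n \<and> k < n \<and> j \<noteq> k \<and> (v = M True i j \<or> v = M False i k)"

fun valid :: "nat \<Rightarrow> vtx \<Rightarrow> bool" where
  "valid n (L c i) \<longleftrightarrow> i < n"
| "valid n (R c j) \<longleftrightarrow> j < n"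
| "valid n (M c i j) \<longleftrightarrow> i < n \<and> j < n"
| "valid n (W i j k) \<longleftrightarrow> i < n \<and> j < n \<and> k < n \<and> j \<noteq> k"

definition vertices :: "nat \<Rightarrow> vtx set" where
  "vertices n = {v. valid n v}"

lemma finite_vertices: "finite (vertices n)"
proof (rule finite_subset)
  show "vertices n \<subseteq> (\<lambda>(c, i). L c i) ` (UNIV \<times> {..<n}) \<union> (\<lambda>(c, j). R c j) ` (UNIV \<times> {..<n})
      \<union> (\<lambda>(c, i, j). M c i j) ` (UNIV \<times> {..<n} \<times> {..<n})
      \<union> (\<lambda>(i, j, k). W i j k) ` ({..<n} \<times> {..<n} \<times> {..<n})"
    unfolding vertices_def by (rule subsetI, simp, elim valid.elims) (auto simp: image_iff)
qed simp

lemma adj_sym: "adj n u v \<Longrightarrow> adj n v u"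
  by (cases u; cases v) (auto split: if_splits)

lemma valid_if_adj: "adj n u v \<Longrightarrow> valid n u"
  by (cases u) (auto split: if_splits)

lemma simple_graph_adj: "simple_graph (vertices n) (adj n)"
proof -
  have "adj n u v \<Longrightarrow> u \<noteq> v" for u v by (cases u; cases v) (auto split: if_splits)
  then show ?thesis
    using finite_vertices adj_sym valid_if_adj unfolding simple_graph_def vertices_def by blast
qed

lemma finite_neighbours: "finite {w. adj n v w}"
  using simple_graph_adj finite_vertices
  by (auto simp: simple_graph_def intro: finite_subset[of _ "vertices n"])

lemma degree_L: "i < n \<Longrightarrow> degree (adj n) (L c i) = Suc n"
proof -
  assume "i < n"
  then have "{w. adj n (L c i) w} = insert (R c i) (M c i ` {..<n})" by auto
  then show ?thesis
    by (simp add: degree_def card_insert_disjoint card_image inj_on_def image_iff)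
qed

lemma degree_R: "j < n \<Longrightarrow> degree (adj n) (R c j) = Suc n"
proof -
  assume "j < n"
  then have "{w. adj n (R c j) w} = insert (L c j) ((\<lambda>i. M c i j) ` {..<n})" by auto
  then show ?thesis
    by (simp add: degree_def card_insert_disjoint card_image inj_on_def image_iff)
qed

lemma degree_M: "i < n \<Longrightarrow> j < n \<Longrightarrow> degree (adj n) (M c i j) = Suc n"
proof -
  assume ij: "i < n" "j < n"
  define g where "g k = (if c then W i j k else W i k j)" for k
  have "degree (adj n) (M c i j) = card ({L c i, R c j} \<union> g ` ({..<n} - {j}))"
    unfolding degree_def using ij by (intro arg_cong[where f = card]) (auto simp: g_def)
  also have "\<dots> = card {L c i, R c j} + card (g ` ({..<n} - {j}))"
    by (rule card_Un_disjoint) (auto simp: g_def)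
  also have "card (g ` ({..<n} - {j})) = n - 1"
    using ij by (subst card_image) (auto simp: g_def inj_on_def)
  finally show ?thesis using ij by simp
qed

lemma degree_W_le: "degree (adj n) (W i j k) \<le> 2"
  unfolding degree_def by (rule card_le_2_if_subset_doubleton[of _ "M True i j" "M False i k"]) auto

lemma max_degree_adj:
  assumes "n \<ge> 1" shows "max_degree (vertices n) (adj n) (Suc n)"
proof -
  have "degree (adj n) v \<le> Suc n" if "valid n v" for v
    using that assms degree_L degree_R degree_M degree_W_le[THEN order_trans] by (cases v) auto
  moreover have "L True 0 \<in> vertices n" "degree (adj n) (L True 0) = Suc n"
    using assms degree_L by (auto simp: vertices_def)
  ultimately show ?thesis unfolding max_degree_def vertices_def by blast
qed

fun rank :: "vtx \<Rightarrow> nat" where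
  "rank (W _ _ _) = 0"
| "rank (M _ _ _) = 1"
| "rank (L _ _) = 2"
| "rank (R _ _) = 2"

lemma card_upper_neighbours: "card {w. adj n v w \<and> rank v \<le> rank w} \<le> 2"
proof (cases v)
  case (L c i)
  then show ?thesis by (intro card_le_2_if_subset_doubleton[of _ "R c i" "R c i"]) auto
next
  case (R c j)
  then show ?thesis by (intro card_le_2_if_subset_doubleton[of _ "L c j" "L c j"]) auto
next
  case (M c i j)
  then show ?thesis by (intro card_le_2_if_subset_doubleton[of _ "L c i" "R c j"]) auto
next
  case (W i j k)
  then show ?thesis by (intro card_le_2_if_subset_doubleton[of _ "M True i j" "M False i k"]) auto
qed

lemma degenerate_adj: "degenerate (vertices n) (adj n) 2"
  using finite_neighbours card_upper_neighbours by (rule degenerate_if_rank)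

definition core :: "nat \<Rightarrow> vtx set" where
  "core n = {v \<in> vertices n. 0 < rank v}"

lemma card_square_neighbours_in_core:
  assumes "v \<in> core n"
  shows "3 * n - 1 \<le> card {w \<in> core n. graph_square (adj n) v w}"
proof -
  have "finite {w \<in> core n. graph_square (adj n) v w}"
    using finite_vertices by (auto simp: core_def)
  moreover obtain T where "T \<subseteq> {w \<in> core n. graph_square (adj n) v w}" "card T = 3 * n - 1"
  proof (cases v)
    case (L c i)
    with assms have i: "i < n" by (simp add: core_def vertices_def)
    let ?T = "R c ` {..<n} \<union> M c i ` {..<n} \<union> (\<lambda>k. M c k i) ` ({..<n} - {i})"
    have "?T \<subseteq> {w \<in> core n. graph_square (adj n) v w}"
      using i L by (auto simp: core_def vertices_def graph_square_def)
    moreover have "card ?T = 3 * n - 1"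
      using i by (subst card_Un_disjoint, auto)+ (auto simp: card_image inj_on_def)
    ultimately show ?thesis by (rule that)
  next
    case (R c j)
    with assms have j: "j < n" by (simp add: core_def vertices_def)
    let ?T = "L c ` {..<n} \<union> (\<lambda>i. M c i j) ` {..<n} \<union> M c j ` ({..<n} - {j})"
    have "?T \<subseteq> {w \<in> core n. graph_square (adj n) v w}"
      using j R by (auto simp: core_def vertices_def graph_square_def)
    moreover have "card ?T = 3 * n - 1"
      using j by (subst card_Un_disjoint, auto)+ (auto simp: card_image inj_on_def)
    ultimately show ?thesis by (rule that)
  next
    case (M c i j)
    with assms have ij: "i < n" "j < n" by (simp_all add: core_def vertices_def)
    let ?T = "M c i ` ({..<n} - {j}) \<union> (\<lambda>k. M c k j) ` ({..<n} - {i})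
      \<union> M (\<not> c) i ` ({..<n} - {j}) \<union> {L c i, R c j}"
    have "?T \<subseteq> {w \<in> core n. graph_square (adj n) v w}"
      using ij M by (cases c) (auto simp: core_def vertices_def graph_square_def)
    moreover have "card ?T = 3 * n - 1"
      using ij by (subst card_Un_disjoint, auto)+ (auto simp: card_image inj_on_def)
    ultimately show ?thesis by (rule that)
  next
    case W
    with assms show ?thesis by (simp add: core_def)
  qed
  ultimately show ?thesis by (metis card_mono)
qed

lemma not_degenerate_square_adj:
  assumes "n \<ge> 1" shows "\<not> degenerate (vertices n) (graph_square (adj n)) (3 * n - 2)"
proof (rule not_degenerate_if_min_degree)
  show "core n \<subseteq> vertices n" by (auto simp: core_def)
  show "core n \<noteq> {}" using assms by (auto simp: core_def vertices_def intro: exI[of _ "L True 0"])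
  show "graph_square (adj n) u v \<Longrightarrow> graph_square (adj n) v u" for u v
    using adj_sym by (rule graph_square_sym)
  show "3 * n - 2 < card {w \<in> core n. graph_square (adj n) v w}" if "v \<in> core n" for v
    using card_square_neighbours_in_core[OF that] assms by linarith
qed

theorem mainTheorem11:
  fixes D :: nat
  assumes "D \<ge> 2"
  shows "\<exists>(V :: nat set) E. simple_graph V E \<and> degenerate V E 2 \<and> max_degree V E D \<and>
           \<not> degenerate V (graph_square E) (3 * D - 5)"
proof -
  define n where "n = D - 1"
  have n: "n \<ge> 1" "D = Suc n" "3 * D - 5 = 3 * n - 2" using assms by (auto simp: n_def)
  have inj: "inj (to_nat :: vtx \<Rightarrow> nat)" by simp
  let ?V = "to_nat ` vertices n" and ?E = "map_graph to_nat (adj n)"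
  have "simple_graph ?V ?E" using inj simple_graph_adj by (rule simple_graph_map_graph)
  moreover have "degenerate ?V ?E 2"
    using degenerate_adj by (simp add: degenerate_map_graph_iff[OF inj])
  moreover have "max_degree ?V ?E D"
    using max_degree_map_graph[OF inj max_degree_adj[OF n(1)]] n(2) by simp
  moreover have "\<not> degenerate ?V (graph_square ?E) (3 * D - 5)"
    using not_degenerate_square_adj[OF n(1)]
    by (simp add: n(3) graph_square_map_graph[OF inj] degenerate_map_graph_iff[OF inj])
  ultimately show ?thesis by blast
qed

end
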